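(* Let $(H,\cdot,1,\Delta,\epsilon,S,\rightharpoonup)$ be a Yetter--Drinfeld post-Hopf algebra and let $P(H)=\{x\in H:\Delta(x)=x\otimes 1+1\otimes x\}$ be its space of primitive elements. Then $\rightharpoonup$ restricts to a linear map $P(H)\otimes P(H)\to P(H)$, and $(P(H),[\cdot,\cdot],\rightharpoonup)$ with $[x,y]=x\cdot y-y\cdot x$ is a post-Lie algebra.
   Context: Conventions: $\Bbbk$ is a field; algebras are associative unital, coalgebras coassociative counital; Sweedler notation $\Delta(c)=c_1\otimes c_2$ (summation omitted), iterated as $c_1\otimes c_2\otimes c_3$ etc.; $H\otimes H$ carries the tensor product coalgebra structure. Definition (Yetter--Drinfeld post-Hopf algebra). A tuple $(H,\cdot,1,\Delta,\epsilon,S,\rightharpoonup)$ where $(H,\cdot,1)$ is an algebra, $(H,\Delta,\epsilon)$ is a coalgebra on the same vector space, $S:H\to H$ is linear with $x_1\cdot S(x_2)=S(x_1)\cdot x_2=\epsilon(x)1$ for all $x$, and $\rightharpoonup:H\otimes H\to H$ is a coalgebra morphism, such that for all $x,y,z\in H$: (P1) $x\rightharpoonup(y\cdot z)=(x_1\rightharpoonup y)\cdot(x_2\rightharpoonup z)$; (P2) $x\rightharpoonup(y\rightharpoonup z)=\big(x_1\cdot(x_2\rightharpoonup y)\big)\rightharpoonup z$; (P3) the map $\alpha_\rightharpoonup:H\to\mathrm{End}(H)$, $\alpha_\rightharpoonup(x)(y)=x\rightharpoonup y$, is convolution invertible, i.e. there is $\beta_\rightharpoonup:H\to\mathrm{End}(H)$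 with $\alpha_\rightharpoonup(x_1)\circ\beta_\rightharpoonup(x_2)=\beta_\rightharpoonup(x_1)\circ\alpha_\rightharpoonup(x_2)=\epsilon(x)\mathrm{Id}_H$; (P4) $\epsilon(a\cdot b)=\epsilon(a)\epsilon(b)$, $\epsilon(1)=1_\Bbbk$, $\Delta(1)=1\otimes 1$; (P5) $\Delta(x\cdot y)=\Big(x_1\cdot\alpha_\rightharpoonup(x_2)\big(\beta_\rightharpoonup(x_4)(y_1)\big)\Big)\otimes(x_3\cdot y_2)$; (P6) setting $x\bullet_\rightharpoonup y:=x_1\cdot(x_2\rightharpoonup y)$, $S_\rightharpoonup(x):=\beta_\rightharpoonup(x_1)(S(x_2))$ and $x\leftharpoonup y:=\big(S_\rightharpoonup(x_1\rightharpoonup y_1)\bullet_\rightharpoonup x_2\big)\bullet_\rightharpoonup y_2$, one has $\Delta(S_\rightharpoonup(x))=S_\rightharpoonup(x_2)\otimes S_\rightharpoonup(x_1)$ and $(x_1\rightharpoonup y_1)\otimes(x_2\leftharpoonup y_2)=(x_2\rightharpoonup y_2)\otimes(x_1\leftharpoonup y_1)$. Definition (post-Lie algebra). A Lie algebra $(\mathfrak g,[\cdot,\cdot])$ with a linear map $\rightharpoonup:\mathfrak g\otimes\mathfrak g\to\mathfrak g$ such that for all $x,y,z$: $x\rightharpoonup[y,z]=[x\rightharpoonup y,z]+[y,x\rightharpoonup z]$ and $\big([x,y]+x\rightharpoonup y-y\rightharpoonup x\big)\rightharpoonup z=x\rightharpoonup(y\rightharpoonup z)-y\rightharpoonup(x\rightharpoonup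 z)$. *)

theory Defs
  imports Complex_Main
begin

text \<open>Since Isabelle/HOL has no tensor-product library, an element of H (x) H
(resp. H (x) H (x) H) is represented by a finite list of pairs (resp. triples)
of elements of H, read as the sum of the corresponding simple tensors.
Two such representatives denote the same tensor iff every bilinear
(resp. trilinear) form H x H -> k (resp. H x H x H -> k) takes the same
value on both; these forms are exactly the dual of H (x) H (resp. H (x) H (x) H),
which separates points over a field.
The coproduct Delta is a map delta :: 'v => ('v * 'v) list, and Sweedler sums
are sums over these lists.\<close>

definition lin :: "('k::field \<Rightarrow> 'v::ab_group_add \<Rightarrow> 'v) \<Rightarrow> ('k \<Rightarrow> 'w::ab_group_add \<Rightarrow> 'w) \<Rightarrow> ('v \<Rightarrow> 'w) \<Rightarrow> bool"
  where "lin sc sc' f \<longleftrightarrow> Vector_Spaces.linear sc sc' f"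

definition bilin :: "('k::field \<Rightarrow> 'v::ab_group_add \<Rightarrow> 'v) \<Rightarrow> ('k \<Rightarrow> 'w::ab_group_add \<Rightarrow> 'w) \<Rightarrow> ('v \<Rightarrow> 'v \<Rightarrow> 'w) \<Rightarrow> bool"
  where "bilin sc sc' f \<longleftrightarrow> (\<forall>y. lin sc sc' (\<lambda>x. f x y)) \<and> (\<forall>x. lin sc sc' (f x))"

definition trilin :: "('k::field \<Rightarrow> 'v::ab_group_add \<Rightarrow> 'v) \<Rightarrow> ('k \<Rightarrow> 'w::ab_group_add \<Rightarrow> 'w) \<Rightarrow> ('v \<Rightarrow> 'v \<Rightarrow> 'v \<Rightarrow> 'w) \<Rightarrow> bool"
  where "trilin sc sc' f \<longleftrightarrow> (\<forall>y z. lin sc sc' (\<lambda>x. f x y z)) \<and> (\<forall>x z. lin sc sc' (\<lambda>y. f x y z))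
                              \<and> (\<forall>x y. lin sc sc' (f x y))"

definition teq2 :: "('k::field \<Rightarrow> 'v::ab_group_add \<Rightarrow> 'v) \<Rightarrow> ('v \<times> 'v) list \<Rightarrow> ('v \<times> 'v) list \<Rightarrow> bool"
  where "teq2 sc L M \<longleftrightarrow> (\<forall>B. bilin sc ((*) :: 'k \<Rightarrow> 'k \<Rightarrow> 'k) B \<longrightarrow>
            sum_list (map (\<lambda>(a,b). B a b) L) = sum_list (map (\<lambda>(a,b). B a b) M))"

definition teq3 :: "('k::field \<Rightarrow> 'v::ab_group_add \<Rightarrow> 'v) \<Rightarrow> ('v \<times> 'v \<times> 'v) list \<Rightarrow> ('v \<times> 'v \<times> 'v) list \<Rightarrow> bool"
  where "teq3 sc L M \<longleftrightarrow> (\<forall>T. trilin sc ((*) :: 'k \<Rightarrow> 'k \<Rightarrow> 'k) T \<longrightarrow>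
            sum_list (map (\<lambda>(a,b,c). T a b c) L) = sum_list (map (\<lambda>(a,b,c). T a b c) M))"

definition delta3L :: "('v \<Rightarrow> ('v \<times> 'v) list) \<Rightarrow> 'v \<Rightarrow> ('v \<times> 'v \<times> 'v) list"
  where "delta3L delta x = [(a1, a2, b). (a, b) \<leftarrow> delta x, (a1, a2) \<leftarrow> delta a]"

definition delta3R :: "('v \<Rightarrow> ('v \<times> 'v) list) \<Rightarrow> 'v \<Rightarrow> ('v \<times> 'v \<times> 'v) list"
  where "delta3R delta x = [(a, b1, b2). (a, b) \<leftarrow> delta x, (b1, b2) \<leftarrow> delta b]"

definition delta4 :: "('v \<Rightarrow> ('v \<times> 'v) list) \<Rightarrow> 'v \<Rightarrow> ('v \<times> 'v \<times> 'v \<times> 'v) list"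
  where "delta4 delta x = [(a1, a2, a3, b). (a, b) \<leftarrow> delta x, (c, a3) \<leftarrow> delta a, (a1, a2) \<leftarrow> delta c]"

definition bullet :: "('v \<Rightarrow> 'v \<Rightarrow> 'v) \<Rightarrow> ('v \<Rightarrow> ('v \<times> 'v) list) \<Rightarrow> ('v \<Rightarrow> 'v \<Rightarrow> 'v) \<Rightarrow> 'v \<Rightarrow> 'v \<Rightarrow> 'v::ab_group_add"
  where "bullet mult delta act x y = sum_list [mult x1 (act x2 y). (x1, x2) \<leftarrow> delta x]"

definition Sact :: "('v \<Rightarrow> ('v \<times> 'v) list) \<Rightarrow> ('v \<Rightarrow> 'v \<Rightarrow> 'v) \<Rightarrow> ('v \<Rightarrow> 'v) \<Rightarrow> 'v \<Rightarrow> 'v::ab_group_add"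
  where "Sact delta beta S x = sum_list [beta x1 (S x2). (x1, x2) \<leftarrow> delta x]"

definition lharp :: "('v \<Rightarrow> 'v \<Rightarrow> 'v) \<Rightarrow> ('v \<Rightarrow> ('v \<times> 'v) list) \<Rightarrow> ('v \<Rightarrow> 'v) \<Rightarrow> ('v \<Rightarrow> 'v \<Rightarrow> 'v)
                     \<Rightarrow> ('v \<Rightarrow> 'v \<Rightarrow> 'v) \<Rightarrow> 'v \<Rightarrow> 'v \<Rightarrow> 'v::ab_group_add"
  where "lharp mult delta S act beta x y =
     sum_list [bullet mult delta act (bullet mult delta act (Sact delta beta S (act x1 y1)) x2) y2.
                 (x1, x2) \<leftarrow> delta x, (y1, y2) \<leftarrow> delta y]"

text \<open>Yetter--Drinfeld post-Hopf algebra (H, mult, one, delta, eps, S, act); beta is the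
convolution inverse of alpha_act (which is unique when it exists, so it is taken as a
parameter constrained by (P3)).\<close>
definition yd_post_hopf ::
  "('k::field \<Rightarrow> 'v::ab_group_add \<Rightarrow> 'v) \<Rightarrow> ('v \<Rightarrow> 'v \<Rightarrow> 'v) \<Rightarrow> 'v \<Rightarrow> ('v \<Rightarrow> ('v \<times> 'v) list)
    \<Rightarrow> ('v \<Rightarrow> 'k) \<Rightarrow> ('v \<Rightarrow> 'v) \<Rightarrow> ('v \<Rightarrow> 'v \<Rightarrow> 'v) \<Rightarrow> ('v \<Rightarrow> 'v \<Rightarrow> 'v) \<Rightarrow> bool"
  where "yd_post_hopf sc mult one delta eps S act beta \<longleftrightarrow>
    \<comment> \<open>vector space\<close>
    vector_space sc \<and>
    \<comment> \<open>associative unital algebra\<close>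
    bilin sc sc mult \<and>
    (\<forall>x y z. mult (mult x y) z = mult x (mult y z)) \<and>
    (\<forall>x. mult one x = x \<and> mult x one = x) \<and>
    \<comment> \<open>coassociative counital coalgebra; delta is linear H -> H (x) H\<close>
    (\<forall>c x y. teq2 sc (delta (sc c x + y)) (map (\<lambda>(a,b). (sc c a, b)) (delta x) @ delta y)) \<and>
    lin sc ((*) :: 'k \<Rightarrow> 'k \<Rightarrow> 'k) eps \<and>
    (\<forall>x. teq3 sc (delta3L delta x) (delta3R delta x)) \<and>
    (\<forall>x. sum_list [sc (eps x1) x2. (x1, x2) \<leftarrow> delta x] = x) \<and>
    (\<forall>x. sum_list [sc (eps x2) x1. (x1, x2) \<leftarrow> delta x] = x) \<and>
    \<comment> \<open>S\<close>
    lin sc sc S \<and>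
    (\<forall>x. sum_list [mult x1 (S x2). (x1, x2) \<leftarrow> delta x] = sc (eps x) one) \<and>
    (\<forall>x. sum_list [mult (S x1) x2. (x1, x2) \<leftarrow> delta x] = sc (eps x) one) \<and>
    \<comment> \<open>act is a coalgebra morphism H (x) H -> H\<close>
    bilin sc sc act \<and>
    (\<forall>x y. teq2 sc (delta (act x y)) [(act x1 y1, act x2 y2). (x1, x2) \<leftarrow> delta x, (y1, y2) \<leftarrow> delta y]) \<and>
    (\<forall>x y. eps (act x y) = eps x * eps y) \<and>
    \<comment> \<open>(P1)\<close>
    (\<forall>x y z. act x (mult y z) = sum_list [mult (act x1 y) (act x2 z). (x1, x2) \<leftarrow> delta x]) \<and>
    \<comment> \<open>(P2)\<close>
    (\<forall>x y z. act x (act y z) = act (bullet mult delta act x y) z) \<and>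
    \<comment> \<open>(P3): beta : H -> End(H) linear, convolution inverse of alpha\<close>
    bilin sc sc beta \<and>
    (\<forall>x y. sum_list [act x1 (beta x2 y). (x1, x2) \<leftarrow> delta x] = sc (eps x) y) \<and>
    (\<forall>x y. sum_list [beta x1 (act x2 y). (x1, x2) \<leftarrow> delta x] = sc (eps x) y) \<and>
    \<comment> \<open>(P4)\<close>
    (\<forall>a b. eps (mult a b) = eps a * eps b) \<and> eps one = 1 \<and> teq2 sc (delta one) [(one, one)] \<and>
    \<comment> \<open>(P5)\<close>
    (\<forall>x y. teq2 sc (delta (mult x y))
        [(mult x1 (act x2 (beta x4 y1)), mult x3 y2). (x1, x2, x3, x4) \<leftarrow> delta4 delta x, (y1, y2) \<leftarrow> delta y]) \<and>
    \<comment> \<open>(P6)\<close>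
    (\<forall>x. teq2 sc (delta (Sact delta beta S x))
        [(Sact delta beta S x2, Sact delta beta S x1). (x1, x2) \<leftarrow> delta x]) \<and>
    (\<forall>x y. teq2 sc
        [(act x1 y1, lharp mult delta S act beta x2 y2). (x1, x2) \<leftarrow> delta x, (y1, y2) \<leftarrow> delta y]
        [(act x2 y2, lharp mult delta S act beta x1 y1). (x1, x2) \<leftarrow> delta x, (y1, y2) \<leftarrow> delta y])"

definition primitives :: "('k::field \<Rightarrow> 'v::ab_group_add \<Rightarrow> 'v) \<Rightarrow> 'v \<Rightarrow> ('v \<Rightarrow> ('v \<times> 'v) list) \<Rightarrow> 'v set"
  where "primitives sc one delta = {x. teq2 sc (delta x) [(x, one), (one, x)]}"

definition bilin_on :: "('k::field \<Rightarrow> 'v::ab_group_add \<Rightarrow> 'v) \<Rightarrow> 'v set \<Rightarrow> ('v \<Rightarrow> 'v \<Rightarrow> 'v) \<Rightarrow> bool"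
  where "bilin_on sc P f \<longleftrightarrow>
    (\<forall>c. \<forall>x\<in>P. \<forall>x'\<in>P. \<forall>y\<in>P. f (sc c x + x') y = sc c (f x y) + f x' y) \<and>
    (\<forall>c. \<forall>x\<in>P. \<forall>y\<in>P. \<forall>y'\<in>P. f x (sc c y + y') = sc c (f x y) + f x y')"

definition lie_algebra_on :: "('k::field \<Rightarrow> 'v::ab_group_add \<Rightarrow> 'v) \<Rightarrow> 'v set \<Rightarrow> ('v \<Rightarrow> 'v \<Rightarrow> 'v) \<Rightarrow> bool"
  where "lie_algebra_on sc P br \<longleftrightarrow>
    vector_space sc \<and> module.subspace sc P \<and>
    (\<forall>x\<in>P. \<forall>y\<in>P. br x y \<in> P) \<and> bilin_on sc P br \<and>
    (\<forall>x\<in>P. br x x = 0) \<and>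
    (\<forall>x\<in>P. \<forall>y\<in>P. \<forall>z\<in>P. br x (br y z) + br y (br z x) + br z (br x y) = 0)"

definition post_lie_on :: "('k::field \<Rightarrow> 'v::ab_group_add \<Rightarrow> 'v) \<Rightarrow> 'v set \<Rightarrow> ('v \<Rightarrow> 'v \<Rightarrow> 'v) \<Rightarrow> ('v \<Rightarrow> 'v \<Rightarrow> 'v) \<Rightarrow> bool"
  where "post_lie_on sc P br act \<longleftrightarrow>
    lie_algebra_on sc P br \<and>
    (\<forall>x\<in>P. \<forall>y\<in>P. act x y \<in> P) \<and> bilin_on sc P act \<and>
    (\<forall>x\<in>P. \<forall>y\<in>P. \<forall>z\<in>P. act x (br y z) = br (act x y) z + br y (act x z)) \<and>
    (\<forall>x\<in>P. \<forall>y\<in>P. \<forall>z\<in>P. act (br x y + act x y - act y x) z = act x (act y z) - act y (act x z))"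

end

theory Submission
  imports Defs
begin

text \<open>Tensors are compared through bilinear forms, and a bilinear map into H through the
  linear functionals composed with it, which separate points over a field. For primitive x every
  Sweedler sum over \<Delta>(x) collapses to the two terms x \<otimes> 1 and 1 \<otimes> x. From (P1)--(P3) this
  gives 1 \<rightharpoonup> y = y and, for primitive x, \<epsilon>(x) = 0, x \<rightharpoonup> 1 = 0 and \<beta>(x) = -(x \<rightharpoonup> -);
  hence x \<rightharpoonup> - is a derivation of the product and x \<bullet> y = x y + x \<rightharpoonup> y. Closure of P(H) under
  \<rightharpoonup> follows from \<rightharpoonup> being a coalgebra morphism, closure under the commutator from (P5), and
  the two post-Lie identities are (P1) and (P2) rewritten with these formulas.\<close>

lemma sum_list_map_concat:
  "sum_list (map f (concat xss)) = sum_list (map (\<lambda>xs. sum_list (map f xs)) xss)"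
  by (induction xss) auto

lemma vector_space_field: "vector_space ((*) :: 'k::field \<Rightarrow> 'k \<Rightarrow> 'k)"
  by unfold_locales (auto simp: algebra_simps)

text \<open>A fresh copy of \<open>vector_space\<close>: definitions made in \<open>vector_space\<close> itself would also be
  instantiated for the global interpretation \<open>real_vector\<close>, whose constants then shadow them.\<close>
locale linear_forms = vector_space
begin

definition linear_functional :: "('b \<Rightarrow> 'a) \<Rightarrow> bool" where
  "linear_functional f \<longleftrightarrow> (\<forall>u v. f (u + v) = f u + f v) \<and> (\<forall>c u. f (c *s u) = c * f u)"

definition linear_endo :: "('b \<Rightarrow> 'b) \<Rightarrow> bool" where
  "linear_endo f \<longleftrightarrow> (\<forall>u v. f (u + v) = f u + f v) \<and> (\<forall>c u. f (c *s u) = c *s f u)"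

definition bilinear_form :: "('b \<Rightarrow> 'b \<Rightarrow> 'a) \<Rightarrow> bool" where
  "bilinear_form B \<longleftrightarrow> (\<forall>v. linear_functional (\<lambda>u. B u v)) \<and> (\<forall>u. linear_functional (B u))"

definition bilinear_op :: "('b \<Rightarrow> 'b \<Rightarrow> 'b) \<Rightarrow> bool" where
  "bilinear_op B \<longleftrightarrow> (\<forall>v. linear_endo (\<lambda>u. B u v)) \<and> (\<forall>u. linear_endo (B u))"

lemma lin_field_iff_linear_functional: "lin scale (*) f \<longleftrightarrow> linear_functional f"
  using vector_space_axioms vector_space_field
  by (auto simp: lin_def Vector_Spaces.linear_iff linear_functional_def)

lemma lin_iff_linear_endo: "lin scale scale f \<longleftrightarrow> linear_endo f"
  using vector_space_axioms by (auto simp: lin_def Vector_Spaces.linear_iff linear_endo_def)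

lemma bilin_field_iff_bilinear_form: "bilin scale (*) B \<longleftrightarrow> bilinear_form B"
  by (simp add: bilin_def bilinear_form_def lin_field_iff_linear_functional)

lemma bilin_iff_bilinear_op: "bilin scale scale B \<longleftrightarrow> bilinear_op B"
  by (simp add: bilin_def bilinear_op_def lin_iff_linear_endo)

lemma linear_functionalD:
  assumes "linear_functional f"
  shows "f (u + v) = f u + f v" "f (c *s u) = c * f u" "f 0 = 0" "f (u - v) = f u - f v"
    "f (- u) = - f u"
proof -
  show add: "f (u + v) = f u + f v" for u v using assms by (simp add: linear_functional_def)
  show "f (c *s u) = c * f u" using assms by (simp add: linear_functional_def)
  show zero: "f 0 = 0" using add[of 0 0] by (metis add_cancel_right_right add_0)
  show diff: "f (u - v) = f u - f v" for u v using add[of "u - v" v] by (simp add: algebra_simps)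
  show "f (- u) = - f u" using diff[of 0 u] zero by simp
qed

lemma linear_endoD:
  assumes "linear_endo f"
  shows "f (u + v) = f u + f v" "f (c *s u) = c *s f u" "f 0 = 0" "f (u - v) = f u - f v"
    "f (- u) = - f u"
proof -
  show add: "f (u + v) = f u + f v" for u v using assms by (simp add: linear_endo_def)
  show "f (c *s u) = c *s f u" using assms by (simp add: linear_endo_def)
  show zero: "f 0 = 0" using add[of 0 0] by (metis add_cancel_right_right add_0)
  show diff: "f (u - v) = f u - f v" for u v using add[of "u - v" v] by (simp add: algebra_simps)
  show "f (- u) = - f u" using diff[of 0 u] zero by simp
qed

lemma bilinear_formD:
  "bilinear_form B \<Longrightarrow> linear_functional (\<lambda>u. B u v)"
  "bilinear_form B \<Longrightarrow> linear_functional (B u)"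
  by (simp_all add: bilinear_form_def)

lemma bilinear_form_simps:
  assumes "bilinear_form B"
  shows "B (u + v) w = B u w + B v w" "B (c *s u) w = c * B u w"
    "B 0 w = 0" "B (u - v) w = B u w - B v w" "B (- u) w = - B u w"
    and "B w (u + v) = B w u + B w v" "B w (c *s u) = c * B w u"
    "B w 0 = 0" "B w (u - v) = B w u - B w v" "B w (- u) = - B w u"
  using linear_functionalD[OF bilinear_formD(1)[OF assms]]
    linear_functionalD[OF bilinear_formD(2)[OF assms]]
  by auto

lemma bilinear_opD:
  "bilinear_op B \<Longrightarrow> linear_endo (\<lambda>u. B u v)"
  "bilinear_op B \<Longrightarrow> linear_endo (B u)"
  by (simp_all add: bilinear_op_def)

lemma bilinear_op_simps:
  assumes "bilinear_op B"
  shows "B (u + v) w = B u w + B v w" "B (c *s u) w = c *s B u w"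
    "B 0 w = 0" "B (u - v) w = B u w - B v w" "B (- u) w = - B u w"
    and "B w (u + v) = B w u + B w v" "B w (c *s u) = c *s B w u"
    "B w 0 = 0" "B w (u - v) = B w u - B w v" "B w (- u) = - B w u"
  using linear_endoD[OF bilinear_opD(1)[OF assms]] linear_endoD[OF bilinear_opD(2)[OF assms]]
  by auto

lemma linear_endo_id: "linear_endo (\<lambda>u. u)"
  by (simp add: linear_endo_def)

lemma linear_endo_comp: "linear_endo f \<Longrightarrow> linear_endo g \<Longrightarrow> linear_endo (\<lambda>u. f (g u))"
  by (simp add: linear_endo_def)

lemma linear_functional_comp:
  "linear_functional f \<Longrightarrow> linear_endo g \<Longrightarrow> linear_functional (\<lambda>u. f (g u))"
  by (simp add: linear_functional_def linear_endo_def)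

lemma linear_functional_sum_list_map:
  assumes "\<And>p. p \<in> set L \<Longrightarrow> linear_functional (\<lambda>u. F u p)"
  shows "linear_functional (\<lambda>u. sum_list (map (F u) L))"
  using assms by (induction L) (auto simp: linear_functional_def algebra_simps)

lemma bilinear_form_comp:
  "bilinear_form B \<Longrightarrow> linear_endo f \<Longrightarrow> linear_endo g \<Longrightarrow> bilinear_form (\<lambda>u v. B (f u) (g v))"
  by (simp add: bilinear_form_def linear_functional_def linear_endo_def)

lemma bilinear_op_comp:
  "bilinear_op B \<Longrightarrow> linear_endo f \<Longrightarrow> linear_endo g \<Longrightarrow> bilinear_op (\<lambda>u v. B (f u) (g v))"
  by (simp add: bilinear_op_def linear_endo_def)

lemma bilinear_form_compose_functional:
  "linear_functional f \<Longrightarrow> bilinear_op \<Phi> \<Longrightarrow> bilinear_form (\<lambda>u v. f (\<Phi> u v))"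
  by (simp add: bilinear_form_def bilinear_op_def linear_functional_def linear_endo_def)

lemma bilinear_form_add:
  "bilinear_form B \<Longrightarrow> bilinear_form C \<Longrightarrow> bilinear_form (\<lambda>u v. B u v + C u v)"
  by (simp add: bilinear_form_def linear_functional_def algebra_simps)

lemma linear_functional_sum_list:
  "linear_functional f \<Longrightarrow> f (sum_list xs) = sum_list (map f xs)"
  by (induction xs) (simp_all add: linear_functionalD)

text \<open>Over a field every nonzero vector is sent to 1 by some functional (extend it to a basis).\<close>
lemma linear_functionals_separate:
  assumes "\<And>f. linear_functional f \<Longrightarrow> f u = f v"
  shows "u = v"
proof (rule ccontr)
  assume "u \<noteq> v"
  interpret pair: vector_space_pair scale "(*) :: 'a \<Rightarrow> 'a \<Rightarrow> 'a"
    using vector_space_axioms vector_space_field by (simp add: vector_space_pair_def)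
  have "independent {u - v}"
    using \<open>u \<noteq> v\<close> by (simp add: dependent_single)
  from pair.linear_independent_extend[OF this, of "\<lambda>_. 1"]
  obtain g where "Vector_Spaces.linear scale (*) g" "g (u - v) = 1"
    by auto
  then have "linear_functional g"
    using lin_field_iff_linear_functional by (simp add: lin_def)
  with \<open>g (u - v) = 1\<close> show False
    using assms[of g] by (simp add: linear_functionalD)
qed

lemma teq2_sum_bilinear_form:
  "teq2 scale L M \<Longrightarrow> bilinear_form B \<Longrightarrow> (\<Sum>(a,b)\<leftarrow>L. B a b) = (\<Sum>(a,b)\<leftarrow>M. B a b)"
  by (simp add: teq2_def bilin_field_iff_bilinear_form)

lemma teq2_sum_bilinear_op:
  assumes "teq2 scale L M" and "bilinear_op \<Phi>"
  shows "(\<Sum>(a,b)\<leftarrow>L. \<Phi> a b) = (\<Sum>(a,b)\<leftarrow>M. \<Phi> a b)"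
proof (rule linear_functionals_separate)
  fix f assume f: "linear_functional f"
  show "f (\<Sum>(a,b)\<leftarrow>L. \<Phi> a b) = f (\<Sum>(a,b)\<leftarrow>M. \<Phi> a b)"
    using teq2_sum_bilinear_form[OF assms(1) bilinear_form_compose_functional[OF f assms(2)]] f
    by (simp add: linear_functional_sum_list split_def o_def)
qed

end

locale yd_post_hopf_algebra =
  fixes sc :: "'k::field \<Rightarrow> 'v::ab_group_add \<Rightarrow> 'v"
    and mult :: "'v \<Rightarrow> 'v \<Rightarrow> 'v" and one :: 'v
    and delta :: "'v \<Rightarrow> ('v \<times> 'v) list" and eps :: "'v \<Rightarrow> 'k"
    and S :: "'v \<Rightarrow> 'v" and act beta :: "'v \<Rightarrow> 'v \<Rightarrow> 'v"
  assumes yd_post_hopf: "yd_post_hopf sc mult one delta eps S act beta"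
begin

sublocale linear_forms sc
  using yd_post_hopf by (simp add: linear_forms_def yd_post_hopf_def)

abbreviation P :: "'v set" where "P \<equiv> primitives sc one delta"

lemma
  shows mult_bilinear: "bilinear_op mult"
    and mult_assoc: "mult (mult x y) z = mult x (mult y z)"
    and mult_one_left: "mult one x = x"
    and mult_one_right: "mult x one = x"
    and delta_scale_add: "teq2 sc (delta (sc c x + y)) (map (\<lambda>(a,b). (sc c a, b)) (delta x) @ delta y)"
    and eps_linear: "linear_functional eps"
    and counit_left: "(\<Sum>(x1, x2)\<leftarrow>delta x. sc (eps x1) x2) = x"
    and act_bilinear: "bilinear_op act"
    and delta_act:
      "teq2 sc (delta (act x y)) [(act x1 y1, act x2 y2). (x1, x2) \<leftarrow> delta x, (y1, y2) \<leftarrow> delta y]"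
    and act_mult: "act x (mult y z) = (\<Sum>(x1, x2)\<leftarrow>delta x. mult (act x1 y) (act x2 z))"
    and act_act: "act x (act y z) = act (bullet mult delta act x y) z"
    and beta_bilinear: "bilinear_op beta"
    and act_beta: "(\<Sum>(x1, x2)\<leftarrow>delta x. act x1 (beta x2 y)) = sc (eps x) y"
    and eps_one: "eps one = 1"
    and delta_one: "teq2 sc (delta one) [(one, one)]"
    and delta_mult: "teq2 sc (delta (mult x y))
        [(mult x1 (act x2 (beta x4 y1)), mult x3 y2). (x1, x2, x3, x4) \<leftarrow> delta4 delta x, (y1, y2) \<leftarrow> delta y]"
  using yd_post_hopf
  unfolding yd_post_hopf_def bilin_iff_bilinear_op bilin_field_iff_bilinear_form
    lin_field_iff_linear_functional
  by auto

lemmas mult_linear = bilinear_opD[OF mult_bilinear]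
lemmas act_linear = bilinear_opD[OF act_bilinear]
lemmas beta_linear = bilinear_opD[OF beta_bilinear]
lemmas mult_simps = bilinear_op_simps[OF mult_bilinear]
lemmas act_simps = bilinear_op_simps[OF act_bilinear]

lemma delta_sum_scale_add:
  assumes B: "bilinear_form B"
  shows "(\<Sum>(a,b)\<leftarrow>delta (sc c x + y). B a b)
       = c * (\<Sum>(a,b)\<leftarrow>delta x. B a b) + (\<Sum>(a,b)\<leftarrow>delta y. B a b)"
proof -
  have scale_first: "(\<Sum>(a,b)\<leftarrow>map (\<lambda>(a,b). (sc c a, b)) L. B a b) = c * (\<Sum>(a,b)\<leftarrow>L. B a b)"
    for L
    by (induction L) (auto simp: bilinear_form_simps[OF B] algebra_simps)
  have "(\<Sum>(a,b)\<leftarrow>delta (sc c x + y). B a b)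
      = (\<Sum>(a,b)\<leftarrow>map (\<lambda>(a,b). (sc c a, b)) (delta x) @ delta y. B a b)"
    by (rule teq2_sum_bilinear_form[OF delta_scale_add B])
  then show ?thesis
    by (simp only: map_append sum_list_append scale_first)
qed

lemma linear_functional_delta_sum:
  assumes "bilinear_form B"
  shows "linear_functional (\<lambda>x. \<Sum>(a,b)\<leftarrow>delta x. B a b)"
proof -
  have zero: "(\<Sum>(a,b)\<leftarrow>delta 0. B a b) = 0"
    using delta_sum_scale_add[OF assms, of "-1" 0 0] by simp
  show ?thesis
    unfolding linear_functional_def
    using delta_sum_scale_add[OF assms, of 1] delta_sum_scale_add[OF assms, where y=0]
    by (simp add: zero)
qed

lemma primitive_iff:
  "x \<in> P \<longleftrightarrow> (\<forall>B. bilinear_form B \<longrightarrow> (\<Sum>(a,b)\<leftarrow>delta x. B a b) = B x one + B one x)"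
  by (simp add: primitives_def teq2_def bilin_field_iff_bilinear_form)

lemma primitive_delta_sum_form:
  "x \<in> P \<Longrightarrow> bilinear_form B \<Longrightarrow> (\<Sum>(a,b)\<leftarrow>delta x. B a b) = B x one + B one x"
  by (simp add: primitive_iff)

lemma primitive_delta_sum:
  "x \<in> P \<Longrightarrow> bilinear_op \<Phi> \<Longrightarrow> (\<Sum>(a,b)\<leftarrow>delta x. \<Phi> a b) = \<Phi> x one + \<Phi> one x"
  using teq2_sum_bilinear_op[of "delta x" "[(x, one), (one, x)]"] by (simp add: primitives_def)

lemma one_delta_sum_form:
  "bilinear_form B \<Longrightarrow> (\<Sum>(a,b)\<leftarrow>delta one. B a b) = B one one"
  using teq2_sum_bilinear_form[OF delta_one] by simp

lemma one_delta_sum: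
  "bilinear_op \<Phi> \<Longrightarrow> (\<Sum>(a,b)\<leftarrow>delta one. \<Phi> a b) = \<Phi> one one"
  using teq2_sum_bilinear_op[OF delta_one] by simp

lemma primitives_subspace: "subspace P"
proof -
  have "sc c x + y \<in> P" if "x \<in> P" "y \<in> P" for c x y
    unfolding primitive_iff
  proof (intro allI impI)
    fix B assume B: "bilinear_form B"
    show "(\<Sum>(a,b)\<leftarrow>delta (sc c x + y). B a b) = B (sc c x + y) one + B one (sc c x + y)"
      using delta_sum_scale_add[OF B] primitive_delta_sum_form[OF that(1) B]
        primitive_delta_sum_form[OF that(2) B]
      by (simp add: bilinear_form_simps[OF B] algebra_simps)
  qed
  moreover have "0 \<in> P"
    unfolding primitive_iff
    using linear_functionalD(3)[OF linear_functional_delta_sum] by (simp add: bilinear_form_simps)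
  ultimately show ?thesis
    unfolding subspace_def by (metis scale_one add.right_neutral)
qed

lemma act_one_beta_one: "act one (beta one y) = y"
  using one_delta_sum[OF bilinear_op_comp[OF act_bilinear linear_endo_id beta_linear(1)], of y]
    act_beta[where x=one and y=y]
  by (simp add: eps_one)

lemma act_one_mult: "act one (mult y z) = mult (act one y) (act one z)"
  using one_delta_sum[OF bilinear_op_comp[OF mult_bilinear act_linear(1) act_linear(1)]]
    act_mult[where x=one and y=y and z=z]
  by simp

lemma bullet_one: "bullet mult delta act one y = act one y"
  using one_delta_sum[OF bilinear_op_comp[OF mult_bilinear linear_endo_id act_linear(1)]]
  by (simp add: bullet_def mult_one_left)

text \<open>act one is multiplicative with right inverse beta one, so it fixes one; by (P2) it is
  idempotent, hence the identity.\<close>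
lemma act_one: "act one y = y"
proof -
  have "mult (act one one) w = w" for w
    using act_one_mult[of one "beta one w"] by (simp add: act_one_beta_one mult_one_left)
  then have one_fixed: "act one one = one"
    by (metis mult_one_right)
  have "act one (act one z) = act one z" for z
    using act_act[where x=one and y=one and z=z] by (simp add: bullet_one one_fixed)
  then show ?thesis
    using act_one_beta_one by metis
qed

lemma beta_one: "beta one y = y"
  using act_one_beta_one[of y] by (simp add: act_one)

lemma eps_primitive:
  assumes x: "x \<in> P"
  shows "eps x = 0"
proof -
  have "bilinear_op (\<lambda>a b. sc (eps a) b)"
    using eps_linear
    by (simp add: bilinear_op_def linear_endo_def linear_functional_def algebra_simps)
  from primitive_delta_sum[OF x this] counit_left[of x]
  have "sc (eps x) one = 0"
    by (simp add: eps_one)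
  moreover have "x = 0" if "one = 0"
    using mult_one_left[of x] by (simp add: that mult_simps)
  ultimately show ?thesis
    using linear_functionalD(3)[OF eps_linear] by auto
qed

lemma act_primitive_one:
  assumes x: "x \<in> P"
  shows "act x one = 0"
proof -
  have "act x one = (\<Sum>(a,b)\<leftarrow>delta x. mult (act a one) (act b one))"
    using act_mult[where x=x and y=one and z=one] by (simp add: mult_one_left)
  also have "\<dots> = mult (act x one) (act one one) + mult (act one one) (act x one)"
    by (rule primitive_delta_sum[OF x bilinear_op_comp[OF mult_bilinear act_linear(1) act_linear(1)]])
  finally have "act x one = act x one + act x one"
    by (simp add: act_one mult_one_left mult_one_right)
  then show ?thesis
    by simp
qed

lemma beta_primitive:
  assumes x: "x \<in> P"
  shows "beta x y = - act x y"
proof -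
  have "act x y + beta x y = 0"
    using primitive_delta_sum[OF x bilinear_op_comp[OF act_bilinear linear_endo_id beta_linear(1)]]
      act_beta[where x=x and y=y]
    by (simp add: eps_primitive[OF x] act_one beta_one)
  then show ?thesis
    by (simp add: eq_neg_iff_add_eq_0 add.commute)
qed

lemma bullet_primitive:
  assumes x: "x \<in> P"
  shows "bullet mult delta act x y = mult x y + act x y"
  using primitive_delta_sum[OF x bilinear_op_comp[OF mult_bilinear linear_endo_id act_linear(1)]]
  by (simp add: bullet_def mult_one_left act_one)

lemma act_primitive_mult:
  assumes x: "x \<in> P"
  shows "act x (mult y z) = mult (act x y) z + mult y (act x z)"
  using primitive_delta_sum[OF x bilinear_op_comp[OF mult_bilinear act_linear(1) act_linear(1)]]
    act_mult[where x=x and y=y and z=z]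
  by (simp add: act_one)

lemma act_primitives_closed:
  assumes x: "x \<in> P" and y: "y \<in> P"
  shows "act x y \<in> P"
  unfolding primitive_iff
proof (intro allI impI)
  fix B assume B: "bilinear_form B"
  have inner: "(\<Sum>(y1,y2)\<leftarrow>delta y. B (act a y1) (act b y2))
      = B (act a y) (act b one) + B (act a one) (act b y)" for a b
    by (rule primitive_delta_sum_form[OF y bilinear_form_comp[OF B act_linear(2) act_linear(2)]])
  have "(\<Sum>(a,b)\<leftarrow>delta (act x y). B a b)
      = (\<Sum>(x1,x2)\<leftarrow>delta x. \<Sum>(y1,y2)\<leftarrow>delta y. B (act x1 y1) (act x2 y2))"
    using teq2_sum_bilinear_form[OF delta_act B] by (simp add: sum_list_map_concat o_def split_def)
  also have "\<dots> = (\<Sum>(x1,x2)\<leftarrow>delta x. B (act x1 y) (act x2 one) + B (act x1 one) (act x2 y))"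
    by (simp only: inner)
  also have "\<dots> = B (act x y) (act one one) + B (act x one) (act one y)
      + (B (act one y) (act x one) + B (act one one) (act x y))"
    by (rule primitive_delta_sum_form[OF x bilinear_form_add[OF
          bilinear_form_comp[OF B act_linear(1) act_linear(1)]
          bilinear_form_comp[OF B act_linear(1) act_linear(1)]]])
  also have "\<dots> = B (act x y) one + B one (act x y)"
    by (simp add: act_one act_primitive_one[OF x] bilinear_form_simps[OF B])
  finally show "(\<Sum>(a,b)\<leftarrow>delta (act x y). B a b) = B (act x y) one + B one (act x y)" .
qed

lemma primitive_delta4_sum:
  assumes x: "x \<in> P"
    and F1: "\<And>b c d. linear_functional (\<lambda>a. F a b c d)"
    and F2: "\<And>a c d. linear_functional (\<lambda>b. F a b c d)"
    and F3: "\<And>a b d. linear_functional (\<lambda>c. F a b c d)"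
    and F4: "\<And>a b c. linear_functional (\<lambda>d. F a b c d)"
  shows "(\<Sum>(a1,a2,a3,a4)\<leftarrow>delta4 delta x. F a1 a2 a3 a4)
       = F x one one one + F one x one one + F one one x one + F one one one x"
proof -
  define H where "H c a3 a4 = (\<Sum>(a1,a2)\<leftarrow>delta c. F a1 a2 a3 a4)" for c a3 a4
  define G where "G a a4 = (\<Sum>(c,a3)\<leftarrow>delta a. H c a3 a4)" for a a4
  have F12: "bilinear_form (\<lambda>a1 a2. F a1 a2 a3 a4)" for a3 a4
    using F1 F2 by (simp add: bilinear_form_def)
  have H12: "bilinear_form (\<lambda>c a3. H c a3 a4)" for a4
    unfolding bilinear_form_def H_def
    using linear_functional_delta_sum[OF F12]
    by (auto intro!: linear_functional_sum_list_map simp: split_def F3)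
  have G12: "bilinear_form G"
    unfolding bilinear_form_def G_def H_def
    using linear_functional_delta_sum[OF H12, unfolded H_def]
    by (auto intro!: linear_functional_sum_list_map simp: split_def F4)
  have "(\<Sum>(a1,a2,a3,a4)\<leftarrow>delta4 delta x. F a1 a2 a3 a4) = (\<Sum>(a,a4)\<leftarrow>delta x. G a a4)"
    unfolding delta4_def G_def H_def by (simp add: sum_list_map_concat o_def split_def)
  also have "\<dots> = G x one + G one x"
    by (rule primitive_delta_sum_form[OF x G12])
  also have "\<dots> = H x one one + H one x one + H one one x"
    unfolding G_def by (simp add: primitive_delta_sum_form[OF x H12] one_delta_sum_form[OF H12])
  finally show ?thesis
    unfolding H_def
    by (simp add: primitive_delta_sum_form[OF x F12] one_delta_sum_form[OF F12] add.assoc)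
qed

lemma delta_mult_primitives_sum:
  assumes x: "x \<in> P" and y: "y \<in> P" and B: "bilinear_form B"
  shows "(\<Sum>(a,b)\<leftarrow>delta (mult x y). B a b)
       = B (mult x y) one + B one (mult x y) + B x y + B y x"
proof -
  define F where "F a1 a2 a3 a4 =
      (\<Sum>(y1,y2)\<leftarrow>delta y. B (mult a1 (act a2 (beta a4 y1))) (mult a3 y2))" for a1 a2 a3 a4
  note B1 = bilinear_formD(1)[OF B] and B2 = bilinear_formD(2)[OF B]
  have F1: "linear_functional (\<lambda>a. F a b c d)" for b c d
    unfolding F_def
    by (rule linear_functional_sum_list_map) (simp add: split_def linear_functional_comp[OF B1 mult_linear(1)])
  have F2: "linear_functional (\<lambda>b. F a b c d)" for a c d
    unfolding F_def
    by (rule linear_functional_sum_list_map)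
      (simp add: split_def linear_functional_comp[OF B1 linear_endo_comp[OF mult_linear(2) act_linear(1)]])
  have F3: "linear_functional (\<lambda>c. F a b c d)" for a b d
    unfolding F_def
    by (rule linear_functional_sum_list_map) (simp add: split_def linear_functional_comp[OF B2 mult_linear(1)])
  have F4: "linear_functional (\<lambda>d. F a b c d)" for a b c
    unfolding F_def
    by (rule linear_functional_sum_list_map)
      (simp add: split_def linear_functional_comp[OF B1
        linear_endo_comp[OF mult_linear(2) linear_endo_comp[OF act_linear(2) beta_linear(1)]]])
  have F_primitive: "F a1 a2 a3 a4 = B (mult a1 (act a2 (beta a4 y))) (mult a3 one)
      + B (mult a1 (act a2 (beta a4 one))) (mult a3 y)" for a1 a2 a3 a4
    unfolding F_def
    by (rule primitive_delta_sum_form[OF y bilinear_form_comp[OF B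
          linear_endo_comp[OF mult_linear(2) linear_endo_comp[OF act_linear(2) beta_linear(2)]]
          mult_linear(2)]])
  have "(\<Sum>(a,b)\<leftarrow>delta (mult x y). B a b) = (\<Sum>(a1,a2,a3,a4)\<leftarrow>delta4 delta x. F a1 a2 a3 a4)"
    using teq2_sum_bilinear_form[OF delta_mult B]
    by (simp add: F_def sum_list_map_concat o_def split_def)
  also have "\<dots> = F x one one one + F one x one one + F one one x one + F one one one x"
    by (rule primitive_delta4_sum[OF x F1 F2 F3 F4])
  finally show ?thesis
    by (simp add: F_primitive act_one beta_one beta_primitive[OF x] act_primitive_one[OF x]
        mult_one_left mult_one_right act_simps mult_simps bilinear_form_simps[OF B])
qed

lemma commutator_primitives_closed:
  assumes x: "x \<in> P" and y: "y \<in> P"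
  shows "mult x y - mult y x \<in> P"
  unfolding primitive_iff
proof (intro allI impI)
  fix B assume B: "bilinear_form B"
  have "(\<Sum>(a,b)\<leftarrow>delta (mult x y - mult y x). B a b)
      = (\<Sum>(a,b)\<leftarrow>delta (mult x y). B a b) - (\<Sum>(a,b)\<leftarrow>delta (mult y x). B a b)"
    by (rule linear_functionalD(4)[OF linear_functional_delta_sum[OF B]])
  also have "\<dots> = B (mult x y - mult y x) one + B one (mult x y - mult y x)"
    by (simp add: delta_mult_primitives_sum[OF x y B] delta_mult_primitives_sum[OF y x B]
        bilinear_form_simps[OF B])
  finally show "(\<Sum>(a,b)\<leftarrow>delta (mult x y - mult y x). B a b)
      = B (mult x y - mult y x) one + B one (mult x y - mult y x)" .
qed

lemma bilin_on_act: "bilin_on sc P act"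
  by (simp add: bilin_on_def act_simps)

lemma bilin_on_commutator: "bilin_on sc P (\<lambda>x y. mult x y - mult y x)"
  by (simp add: bilin_on_def mult_simps algebra_simps)

lemma commutator_jacobi:
  "mult x (mult y z - mult z y) - mult (mult y z - mult z y) x
   + (mult y (mult z x - mult x z) - mult (mult z x - mult x z) y)
   + (mult z (mult x y - mult y x) - mult (mult x y - mult y x) z) = 0"
  by (simp add: mult_simps mult_assoc)

lemma primitives_lie_algebra: "lie_algebra_on sc P (\<lambda>x y. mult x y - mult y x)"
  using vector_space_axioms primitives_subspace commutator_primitives_closed
    bilin_on_commutator commutator_jacobi
  by (simp add: lie_algebra_on_def)

lemma primitives_post_lie: "post_lie_on sc P (\<lambda>x y. mult x y - mult y x) act"
  using primitives_lie_algebra act_primitives_closed bilin_on_act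
  by (simp add: post_lie_on_def act_primitive_mult act_act bullet_primitive act_simps mult_simps)

end

theorem mainTheorem4:
  fixes sc :: "'k::field \<Rightarrow> 'v::ab_group_add \<Rightarrow> 'v"
    and mult :: "'v \<Rightarrow> 'v \<Rightarrow> 'v" and one :: 'v
    and delta :: "'v \<Rightarrow> ('v \<times> 'v) list" and eps :: "'v \<Rightarrow> 'k"
    and S :: "'v \<Rightarrow> 'v" and act beta :: "'v \<Rightarrow> 'v \<Rightarrow> 'v"
  assumes "yd_post_hopf sc mult one delta eps S act beta"
  shows "(\<forall>x\<in>primitives sc one delta. \<forall>y\<in>primitives sc one delta. act x y \<in> primitives sc one delta)
       \<and> bilin_on sc (primitives sc one delta) act
       \<and> post_lie_on sc (primitives sc one delta) (\<lambda>x y. mult x y - mult y x) act"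
proof -
  interpret yd_post_hopf_algebra sc mult one delta eps S act beta
    using assms by (rule yd_post_hopf_algebra.intro)
  show ?thesis
    using act_primitives_closed bilin_on_act primitives_post_lie by blast
qed

end
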